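(* Let $A$ be a normal uniform Kan complex, $\pi:B\to A^{\mathrm{I}}$ a normal uniform Kan fibration, and $b:A\to B$ a map with $\pi\circ b=r$, where $r:A\to A^{\mathrm{I}}$ is the constant-path map. Then there is a map $j:A^{\mathrm{I}}\to B$ with $\pi\circ j=1_{A^{\mathrm{I}}}$ and $j\circ r=b$.
   Context: Let $\mathbb{B}$ be the category of finite sets $[n]=\{\bot,x_1,\dots,x_n,\top\}$ ($n\ge0$, $\bot\ne\top$) and functions preserving $\bot,\top$; cartesian cubical sets are presheaves on $\mathbb{B}^{op}$. $\mathrm{I}^n$ is the representable on $[n]$, $\mathrm{I}^n\cong\mathrm{I}\times\dots\times\mathrm{I}$, $\mathrm{I}=\mathrm{I}^1$, $\mathrm{I}^0=1$; the two maps $[1]\to[0]$ give endpoints $0,1:1\to\mathrm{I}$. $A^{\mathrm{I}}$ is the exponential and $r:A\to A^{\mathrm{I}}$ is induced by $\mathrm{I}\to1$. For $1\le i\le n$, $d\in\{0,1\}$, the face $\alpha_i^d:\mathrm{I}^{n-1}\to\mathrm{I}^n$ inserts $d$ in coordinate $i$; for $e\in\{0,1\}$ the open box $\sqcup^n_e\rightarrowtail\mathrm{I}^n$ is the union of the images of all faces $\alpha_i^d$ with $(i,d)\ne(1,e)$, with inclusion $i^n_e$. A uniform Kan fibration structure on $f:Y\to X$: for each $n\ge1$, $e\in\{0,1\}$, $k\ge1$ and commutative square $b':\mathrm{I}^k\times\sqcup^n_e\to Y$, $a:\mathrm{I}^k\times\mathrm{I}^n\to X$ with $fb'=a(1\times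 i^n_e)$, a chosen filler $\phi(a,b')$ ($\phi(a,b')(1\times i^n_e)=b'$, $f\phi(a,b')=a$), with $\phi(a,b')(\alpha\times1)=\phi(a(\alpha\times1),b'(\alpha\times1))$ for all $\alpha:\mathrm{I}^j\to\mathrm{I}^k$ ($j\ge1$). It is normal if for all $n\ge0$, $e$, $k\ge1$ and $c:\mathrm{I}^k\times\mathrm{I}^n\to Y$, with $\pi_n:\mathrm{I}^{n+1}\to\mathrm{I}^n$ forgetting the first coordinate, $\phi(fc(1\times\pi_n),c(1\times\pi_n)(1\times i^{n+1}_e))=c(1\times\pi_n)$. A normal uniform Kan complex is a cubical set $A$ with a normal uniform Kan fibration structure on $A\to1$. *)

theory Defs
  imports Main
begin

text \<open>The object [n] = {bot, x_1, ..., x_n, top} is encoded as {0..n+1}, with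
  bot = 0, x_i = i, top = n+1.  A morphism [n] -> [m] is a function preserving
  bot and top; values outside {0..n+1} are normalised to 0.\<close>

type_synonym bmap = "nat \<Rightarrow> nat"

definition bmor :: "nat \<Rightarrow> nat \<Rightarrow> bmap \<Rightarrow> bool" where
  "bmor n m f \<longleftrightarrow> f 0 = 0 \<and> f (Suc n) = Suc m \<and> (\<forall>i\<in>{1..n}. f i \<le> Suc m)
     \<and> (\<forall>i>Suc n. f i = 0)"

text \<open>bcomp n f g is the composite g o f of f : [n] -> [m] and g : [m] -> [p].\<close>
definition bcomp :: "nat \<Rightarrow> bmap \<Rightarrow> bmap \<Rightarrow> bmap" where
  "bcomp n f g = (\<lambda>i. if i \<le> Suc n then g (f i) else 0)"

definition bid :: "nat \<Rightarrow> bmap" where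
  "bid n = (\<lambda>i. if i \<le> Suc n then i else 0)"

text \<open>The endpoint d of [m]: False = 0 = bot, True = 1 = top.\<close>
definition ep :: "nat \<Rightarrow> bool \<Rightarrow> nat" where
  "ep m d = (if d then Suc m else 0)"

record 'a cset =
  cells :: "nat \<Rightarrow> 'a set"
  act :: "nat \<Rightarrow> nat \<Rightarrow> bmap \<Rightarrow> 'a \<Rightarrow> 'a"   (* act X n m f : X[n] -> X[m] for f : [n] -> [m] *)

definition cubical :: "'a cset \<Rightarrow> bool" where
  "cubical X \<longleftrightarrow>
     (\<forall>n m f x. bmor n m f \<longrightarrow> x \<in> cells X n \<longrightarrow> act X n m f x \<in> cells X m) \<and>
     (\<forall>n x. x \<in> cells X n \<longrightarrow> act X n n (bid n) x = x) \<and>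
     (\<forall>n m p f g x. bmor n m f \<longrightarrow> bmor m p g \<longrightarrow> x \<in> cells X n \<longrightarrow>
        act X n p (bcomp n f g) x = act X m p g (act X n m f x))"

text \<open>Maps of cubical sets: natural transformations, extensional (undefined off the cells).\<close>
definition nat_trans :: "'a cset \<Rightarrow> 'b cset \<Rightarrow> (nat \<Rightarrow> 'a \<Rightarrow> 'b) \<Rightarrow> bool" where
  "nat_trans X Y \<eta> \<longleftrightarrow>
     (\<forall>m x. x \<in> cells X m \<longrightarrow> \<eta> m x \<in> cells Y m) \<and>
     (\<forall>n m f x. bmor n m f \<longrightarrow> x \<in> cells X n \<longrightarrow> \<eta> m (act X n m f x) = act Y n m f (\<eta> n x)) \<and>
     (\<forall>m x. x \<notin> cells X m \<longrightarrow> \<eta> m x = undefined)"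

definition ncomp :: "'a cset \<Rightarrow> (nat \<Rightarrow> 'b \<Rightarrow> 'c) \<Rightarrow> (nat \<Rightarrow> 'a \<Rightarrow> 'b) \<Rightarrow> (nat \<Rightarrow> 'a \<Rightarrow> 'c)" where
  "ncomp X \<eta> \<theta> = (\<lambda>m x. if x \<in> cells X m then \<eta> m (\<theta> m x) else undefined)"

definition nid :: "'a cset \<Rightarrow> (nat \<Rightarrow> 'a \<Rightarrow> 'a)" where
  "nid X = (\<lambda>m x. if x \<in> cells X m then x else undefined)"

definition nrestr :: "'a cset \<Rightarrow> (nat \<Rightarrow> 'a \<Rightarrow> 'b) \<Rightarrow> (nat \<Rightarrow> 'a \<Rightarrow> 'b)" where
  "nrestr S \<eta> = (\<lambda>m x. if x \<in> cells S m then \<eta> m x else undefined)"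

text \<open>Representable I^n = y[n]: its m-cells are the B-maps [n] -> [m].\<close>
definition yon :: "nat \<Rightarrow> bmap cset" where
  "yon n = \<lparr> cells = (\<lambda>m. {g. bmor n m g}), act = (\<lambda>p q f g. bcomp n g f) \<rparr>"

definition cprod :: "'a cset \<Rightarrow> 'b cset \<Rightarrow> ('a \<times> 'b) cset" where
  "cprod X Y = \<lparr> cells = (\<lambda>m. cells X m \<times> cells Y m),
                 act = (\<lambda>n m f z. (act X n m f (fst z), act Y n m f (snd z))) \<rparr>"

definition terminal :: "unit cset" where
  "terminal = \<lparr> cells = (\<lambda>m. UNIV), act = (\<lambda>n m f x. x) \<rparr>"

definition to_terminal :: "'a cset \<Rightarrow> (nat \<Rightarrow> 'a \<Rightarrow> unit)" where
  "to_terminal X = (\<lambda>m x. if x \<in> cells X m then () else undefined)"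

text \<open>The face alpha_i^d : I^(n-1) -> I^n corresponds (Yoneda) to the B-map
  face n i d : [n] -> [n-1] sending x_i to the endpoint d and the other
  generators in order; on cells it is precomposition with it.\<close>
definition face :: "nat \<Rightarrow> nat \<Rightarrow> bool \<Rightarrow> bmap" where
  "face n i d = (\<lambda>j. if j = 0 then 0 else if j < i then j else if j = i then ep (n - 1) d
                     else if j \<le> Suc n then j - 1 else 0)"

text \<open>The open box: union of the images of all faces alpha_i^d with (i,d) /= (1,e).\<close>
definition obox :: "nat \<Rightarrow> bool \<Rightarrow> bmap cset" where
  "obox n e = \<lparr> cells = (\<lambda>m. {h. \<exists>i d. 1 \<le> i \<and> i \<le> n \<and> (i, d) \<noteq> (1, e) \<and>
                        h \<in> (\<lambda>g. bcomp n (face n i d) g) ` {g. bmor (n - 1) m g}}),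
                act = (\<lambda>p q f g. bcomp n g f) \<rparr>"

definition cube :: "nat \<Rightarrow> nat \<Rightarrow> (bmap \<times> bmap) cset" where
  "cube k n = cprod (yon k) (yon n)"

definition boxk :: "nat \<Rightarrow> nat \<Rightarrow> bool \<Rightarrow> (bmap \<times> bmap) cset" where
  "boxk k n e = cprod (yon k) (obox n e)"

definition times1 :: "(nat \<Rightarrow> bmap \<Rightarrow> bmap) \<Rightarrow> (nat \<Rightarrow> bmap \<times> bmap \<Rightarrow> bmap \<times> bmap)" where
  "times1 \<alpha> = (\<lambda>p z. (\<alpha> p (fst z), snd z))"

text \<open>pi_n : I^(n+1) -> I^n forgetting the first coordinate corresponds to the
  B-map shift n : [n] -> [n+1], x_j |-> x_(j+1).\<close>
definition shift :: "nat \<Rightarrow> bmap" where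
  "shift n = (\<lambda>j. if j = 0 then 0 else if j \<le> Suc n then Suc j else 0)"

definition one_times_pi :: "nat \<Rightarrow> (nat \<Rightarrow> bmap \<times> bmap \<Rightarrow> bmap \<times> bmap)" where
  "one_times_pi n = (\<lambda>p z. (fst z, bcomp n (shift n) (snd z)))"

type_synonym ('x, 'y) filler_op =
  "nat \<Rightarrow> bool \<Rightarrow> nat \<Rightarrow> (nat \<Rightarrow> bmap \<times> bmap \<Rightarrow> 'x) \<Rightarrow> (nat \<Rightarrow> bmap \<times> bmap \<Rightarrow> 'y)
     \<Rightarrow> (nat \<Rightarrow> bmap \<times> bmap \<Rightarrow> 'y)"

definition kan_square :: "'y cset \<Rightarrow> 'x cset \<Rightarrow> (nat \<Rightarrow> 'y \<Rightarrow> 'x) \<Rightarrow> nat \<Rightarrow> bool \<Rightarrow> nat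
    \<Rightarrow> (nat \<Rightarrow> bmap \<times> bmap \<Rightarrow> 'x) \<Rightarrow> (nat \<Rightarrow> bmap \<times> bmap \<Rightarrow> 'y) \<Rightarrow> bool" where
  "kan_square Y X f n e k a b' \<longleftrightarrow> 1 \<le> n \<and> 1 \<le> k \<and>
     nat_trans (cube k n) X a \<and> nat_trans (boxk k n e) Y b' \<and>
     ncomp (boxk k n e) f b' = nrestr (boxk k n e) a"

definition uniform_kan_fib :: "'y cset \<Rightarrow> 'x cset \<Rightarrow> (nat \<Rightarrow> 'y \<Rightarrow> 'x) \<Rightarrow> ('x, 'y) filler_op \<Rightarrow> bool" where
  "uniform_kan_fib Y X f \<phi> \<longleftrightarrow>
     (\<forall>n e k a b'. kan_square Y X f n e k a b' \<longrightarrow>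
        nat_trans (cube k n) Y (\<phi> n e k a b') \<and>
        nrestr (boxk k n e) (\<phi> n e k a b') = b' \<and>
        ncomp (cube k n) f (\<phi> n e k a b') = a) \<and>
     (\<forall>n e k a b' j \<alpha>. kan_square Y X f n e k a b' \<longrightarrow> 1 \<le> j \<longrightarrow> nat_trans (yon j) (yon k) \<alpha> \<longrightarrow>
        ncomp (cube j n) (\<phi> n e k a b') (times1 \<alpha>) =
        \<phi> n e j (ncomp (cube j n) a (times1 \<alpha>)) (ncomp (boxk j n e) b' (times1 \<alpha>)))"

definition normal_filler :: "'y cset \<Rightarrow> 'x cset \<Rightarrow> (nat \<Rightarrow> 'y \<Rightarrow> 'x) \<Rightarrow> ('x, 'y) filler_op \<Rightarrow> bool" where
  "normal_filler Y X f \<phi> \<longleftrightarrow>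
     (\<forall>n e k c. 1 \<le> k \<longrightarrow> nat_trans (cube k n) Y c \<longrightarrow>
        (let c' = ncomp (cube k (Suc n)) c (one_times_pi n) in
         \<phi> (Suc n) e k (ncomp (cube k (Suc n)) f c') (nrestr (boxk k (Suc n) e) c') = c'))"

definition normal_uniform_kan_fib :: "'y cset \<Rightarrow> 'x cset \<Rightarrow> (nat \<Rightarrow> 'y \<Rightarrow> 'x) \<Rightarrow> bool" where
  "normal_uniform_kan_fib Y X f \<longleftrightarrow>
     (\<exists>\<phi>. uniform_kan_fib Y X f \<phi> \<and> normal_filler Y X f \<phi>)"

definition normal_uniform_kan_complex :: "'a cset \<Rightarrow> bool" where
  "normal_uniform_kan_complex A \<longleftrightarrow> normal_uniform_kan_fib A terminal (to_terminal A)"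

text \<open>The exponential: A^I[n] = Nat(y[n] x I, A); a B-map f : [n] -> [m] acts by
  precomposition with y(f) x 1, where y(f) : y[m] -> y[n] is g |-> g o f.\<close>
definition expo :: "'a cset \<Rightarrow> (nat \<Rightarrow> bmap \<times> bmap \<Rightarrow> 'a) cset" where
  "expo A = \<lparr> cells = (\<lambda>n. {\<eta>. nat_trans (cube n 1) A \<eta>}),
              act = (\<lambda>n m f \<eta>. (\<lambda>p z. if z \<in> cells (cube m 1) p
                                         then \<eta> p (bcomp n f (fst z), snd z) else undefined)) \<rparr>"

text \<open>r : A -> A^I induced by I -> 1: a |-> ((g,h) |-> A(g)(a)).\<close>
definition rmap :: "'a cset \<Rightarrow> (nat \<Rightarrow> 'a \<Rightarrow> (nat \<Rightarrow> bmap \<times> bmap \<Rightarrow> 'a))" where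
  "rmap A = (\<lambda>n a. if a \<in> cells A n
                   then (\<lambda>p z. if z \<in> cells (cube n 1) p then act A n p (fst z) a else undefined)
                   else undefined)"

end

theory Submission
  imports Defs
begin

text \<open>A path \<gamma> in A, i.e. a cube I^m \<times> I \<rightarrow> A, spans an open box in A over I^(m+1) \<times> I^2
  that is \<gamma> on one edge and constant at \<gamma>(-,0) on the two adjacent edges. Its filler H, read as
  a family of paths t \<mapsto> H(-,-,t), is a homotopy in A^I from the constant path r(\<gamma>(-,0)) to \<gamma>.
  Lifting this homotopy along \<pi> with initial value b(\<gamma>(-,0)) and evaluating at t = 1 gives j(\<gamma>),
  which lies over \<gamma>. Uniformity of both fillers makes j natural; when \<gamma> = r(a) both open boxes
  are degenerate, so by normality the fillers are degenerate too and j(r(a)) = b(a).\<close>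

section \<open>Maps of the cube category\<close>

lemma bmorD:
  assumes "bmor n m f"
  shows "f 0 = 0" "f (Suc n) = Suc m" "\<And>i. i \<le> Suc n \<Longrightarrow> f i \<le> Suc m" "\<And>i. Suc n < i \<Longrightarrow> f i = 0"
proof -
  show "f 0 = 0" "f (Suc n) = Suc m" "\<And>i. Suc n < i \<Longrightarrow> f i = 0" using assms by (auto simp: bmor_def)
  fix i assume "i \<le> Suc n" then show "f i \<le> Suc m" using assms
    by (cases "i = 0"; cases "i = Suc n") (auto simp: bmor_def)
qed

lemma bmorI:
  assumes "f 0 = 0" "f (Suc n) = Suc m" "\<And>i. i \<le> Suc n \<Longrightarrow> f i \<le> Suc m" "\<And>i. Suc n < i \<Longrightarrow> f i = 0"
  shows "bmor n m f"
  using assms by (auto simp: bmor_def)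

lemma bmor_bcomp: "bmor n m f \<Longrightarrow> bmor m p g \<Longrightarrow> bmor n p (bcomp n f g)"
  by (rule bmorI) (auto simp: bcomp_def bmorD)

lemma bcomp_assoc: "bmor n m f \<Longrightarrow> bcomp n f (bcomp m g h) = bcomp n (bcomp n f g) h"
  by (auto simp: bcomp_def bmorD fun_eq_iff)

lemma bcomp_bid_left: "bmor n m f \<Longrightarrow> bcomp n (bid n) f = f"
  by (auto simp: bcomp_def bid_def bmorD fun_eq_iff)

lemma bcomp_apply: "i \<le> Suc n \<Longrightarrow> bcomp n f g i = g (f i)"
  by (simp add: bcomp_def)

lemma bmor_face: "1 \<le> i \<Longrightarrow> i \<le> n \<Longrightarrow> bmor n (n - 1) (face n i d)"
  by (rule bmorI) (auto simp: face_def ep_def)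

text \<open>Precomposition with drop_last m is the projection of I^(m+1) onto its first m
  coordinates; last_to_bot m is the m-cell of I^(m+1) whose last coordinate is 0.
  cell1 and cell2 are the cells of I and I^2 with the given coordinates, and precomposition with
  extend_last m m' f is the map I^(m'+1) \<rightarrow> I^(m+1) induced by f, extended by the identity on
  the last coordinate.\<close>

definition drop_last :: "nat \<Rightarrow> bmap" where
  "drop_last m = (\<lambda>i. if i \<le> m then i else if i = Suc m then Suc (Suc m) else 0)"

definition last_to_bot :: "nat \<Rightarrow> bmap" where
  "last_to_bot m = (\<lambda>i. if i \<le> m then i else if i = Suc m then 0 else if i = Suc (Suc m) then Suc m else 0)"

definition cell1 :: "nat \<Rightarrow> nat \<Rightarrow> bmap" where
  "cell1 p v = (\<lambda>i. if i = 0 then 0 else if i = 1 then v else if i = 2 then Suc p else 0)"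

definition cell2 :: "nat \<Rightarrow> nat \<Rightarrow> nat \<Rightarrow> bmap" where
  "cell2 p u v = (\<lambda>i. if i = 0 then 0 else if i = 1 then u else if i = 2 then v else if i = 3 then Suc p else 0)"

definition extend_last :: "nat \<Rightarrow> nat \<Rightarrow> bmap \<Rightarrow> bmap" where
  "extend_last m m' f = (\<lambda>i. if i \<le> m then (if f i = Suc m' then Suc (Suc m') else f i)
      else if i = Suc m then Suc m' else if i = Suc (Suc m) then Suc (Suc m') else 0)"

lemma bmor_drop_last[simp]: "bmor m (Suc m) (drop_last m)"
  by (rule bmorI) (auto simp: drop_last_def)

lemma bmor_last_to_bot[simp]: "bmor (Suc m) m (last_to_bot m)"
  by (rule bmorI) (auto simp: last_to_bot_def)

lemma bmor_cell1[simp]: "v \<le> Suc p \<Longrightarrow> bmor 1 p (cell1 p v)"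
  by (rule bmorI) (auto simp: cell1_def)

lemma bmor_cell2[simp]: "u \<le> Suc p \<Longrightarrow> v \<le> Suc p \<Longrightarrow> bmor 2 p (cell2 p u v)"
  by (rule bmorI) (auto simp: cell2_def numeral_eq_Suc)

lemma bmor_shift: "bmor n (Suc n) (shift n)"
  by (rule bmorI) (auto simp: shift_def)

lemma bmor_extend_last: "bmor m m' f \<Longrightarrow> bmor (Suc m) (Suc m') (extend_last m m' f)"
proof -
  assume f: "bmor m m' f"
  show ?thesis
  proof (rule bmorI)
    fix i assume "i \<le> Suc (Suc m)"
    then show "extend_last m m' f i \<le> Suc (Suc m')" using bmorD(3)[OF f, of i] by (auto simp: extend_last_def)
  qed (auto simp: extend_last_def bmorD(1)[OF f])
qed

lemma cell1_eta: "bmor 1 p h \<Longrightarrow> cell1 p (h 1) = h"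
  by (auto simp: cell1_def fun_eq_iff bmorD) (metis One_nat_def Suc_1 bmorD(2,4) less_2_cases_iff not_less_eq)

lemma bcomp_drop_last_last_to_bot: "bcomp m (drop_last m) (last_to_bot m) = bid m"
  by (auto simp: bcomp_def drop_last_def last_to_bot_def bid_def fun_eq_iff)

lemma bcomp_drop_last_extend_last:
  assumes f: "bmor m m' f"
  shows "bcomp m (drop_last m) (extend_last m m' f) = bcomp m f (drop_last m')"
proof (rule ext)
  fix i
  consider "i \<le> m" | "i = Suc m" | "Suc m < i" by linarith
  then show "bcomp m (drop_last m) (extend_last m m' f) i = bcomp m f (drop_last m') i"
  proof cases
    case 1
    then have "f i \<le> Suc m'" using bmorD(3)[OF f, of i] by simp
    then show ?thesis using 1 by (auto simp: bcomp_def drop_last_def extend_last_def)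
  qed (auto simp: bcomp_def drop_last_def extend_last_def bmorD(2)[OF f])
qed

lemma bcomp_last_to_bot_extend_last:
  assumes f: "bmor m m' f"
  shows "bcomp (Suc m) (last_to_bot m) f = bcomp (Suc m) (extend_last m m' f) (last_to_bot m')"
proof (rule ext)
  fix i
  consider "i \<le> m" | "i = Suc m" | "i = Suc (Suc m)" | "Suc (Suc m) < i" by linarith
  then show "bcomp (Suc m) (last_to_bot m) f i = bcomp (Suc m) (extend_last m m' f) (last_to_bot m') i"
  proof cases
    case 1
    then have "f i \<le> Suc m'" using bmorD(3)[OF f, of i] by simp
    then show ?thesis using 1 by (auto simp: bcomp_def last_to_bot_def extend_last_def)
  qed (auto simp: bcomp_def last_to_bot_def extend_last_def bmorD(1,2)[OF f])
qed

lemma bcomp_drop_last_extend_last_assoc: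
  assumes "bmor m m' f" "bmor (Suc m') p h"
  shows "bcomp m (drop_last m) (bcomp (Suc m) (extend_last m m' f) h) = bcomp m f (bcomp m' (drop_last m') h)"
  by (simp add: assms bcomp_assoc bmor_extend_last bcomp_drop_last_extend_last)

lemma bcomp_cell1: "bmor p p' f \<Longrightarrow> v \<le> Suc p \<Longrightarrow> bcomp 1 (cell1 p v) f = cell1 p' (f v)"
  by (auto simp: bcomp_def cell1_def fun_eq_iff bmorD)

lemma bcomp_cell2:
  "bmor p p' f \<Longrightarrow> u \<le> Suc p \<Longrightarrow> v \<le> Suc p \<Longrightarrow> bcomp 2 (cell2 p u v) f = cell2 p' (f u) (f v)"
  by (auto simp: bcomp_def cell2_def fun_eq_iff bmorD numeral_eq_Suc)

lemma obox_bmor: "h \<in> cells (obox n e) p \<Longrightarrow> bmor n p h"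
  by (clarsimp simp: obox_def) (metis One_nat_def bmor_bcomp bmor_face)

lemma obox_act: "h \<in> cells (obox n e) p \<Longrightarrow> bmor p q f \<Longrightarrow> bcomp n h f \<in> cells (obox n e) q"
proof -
  assume h: "h \<in> cells (obox n e) p" and f: "bmor p q f"
  then obtain i d g where i: "1 \<le> i" "i \<le> n" "(i, d) \<noteq> (1, e)" and g: "bmor (n - 1) p g"
    and hg: "h = bcomp n (face n i d) g"
    by (auto simp: obox_def)
  have "bcomp n h f = bcomp n (face n i d) (bcomp (n - 1) g f)"
    using hg bcomp_assoc[OF bmor_face[OF i(1,2)]] by simp
  moreover have "bmor (n - 1) q (bcomp (n - 1) g f)" using g f bmor_bcomp by blast
  ultimately show ?thesis using i by (auto simp: obox_def)
qed

lemma obox_memI: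
  assumes "1 \<le> i" "i \<le> n" "(i, d) \<noteq> (1, e)" "bmor (n - 1) p g"
  shows "bcomp n (face n i d) g \<in> cells (obox n e) p"
proof -
  have "bcomp n (face n i d) g \<in> (\<lambda>g. bcomp n (face n i d) g) ` {g. bmor (n - 1) p g}"
    using assms(4) by blast
  then show ?thesis using assms(1-3) unfolding obox_def by (simp only: cset.select_convs mem_Collect_eq) blast
qed

lemma obox_2_True_cases: "h \<in> cells (obox 2 True) p \<Longrightarrow> h 1 = 0 \<or> h 2 = 0 \<or> h 2 = Suc p"
  by (clarsimp simp: obox_def) (auto simp: bcomp_def face_def ep_def bmorD split: if_splits)

lemma obox_1_True_cell: "h \<in> cells (obox 1 True) p \<Longrightarrow> h 1 = 0"
  by (clarsimp simp: obox_def bcomp_def face_def ep_def bmorD)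

lemma cell2_top_in_obox: "u \<le> Suc q \<Longrightarrow> cell2 q u (Suc q) \<in> cells (obox 2 True) q"
proof -
  assume u: "u \<le> Suc q"
  have "cell2 q u (Suc q) = bcomp 2 (face 2 2 True) (cell1 q u)"
    by (auto simp: fun_eq_iff bcomp_def cell1_def cell2_def face_def ep_def numeral_eq_Suc)
  then show ?thesis using obox_memI[of 2 2 True True q "cell1 q u"] bmor_cell1[OF u] by simp
qed

lemma cell2_bot_in_obox: "u \<le> Suc q \<Longrightarrow> cell2 q u 0 \<in> cells (obox 2 True) q"
proof -
  assume u: "u \<le> Suc q"
  have "cell2 q u 0 = bcomp 2 (face 2 2 False) (cell1 q u)"
    by (auto simp: fun_eq_iff bcomp_def cell1_def cell2_def face_def ep_def numeral_eq_Suc)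
  then show ?thesis using obox_memI[of 2 2 False True q "cell1 q u"] bmor_cell1[OF u] by simp
qed

declare One_nat_def[simp del]

lemma cell1_1[simp]: "cell1 p v 1 = v"
  by (simp add: cell1_def)

lemma cell2_12[simp]: "cell2 p u v 1 = u" "cell2 p u v 2 = v"
  by (simp_all add: cell2_def)

lemma bmor_coord_le: "bmor 2 p h \<Longrightarrow> h 1 \<le> Suc p" "bmor 2 p h \<Longrightarrow> h 2 \<le> Suc p" "bmor 1 p h \<Longrightarrow> h 1 \<le> Suc p"
  by (auto intro: bmorD(3))

lemma cube_simps:
  "cells (cube k n) p = {z. bmor k p (fst z) \<and> bmor n p (snd z)}"
  "act (cube k n) = (\<lambda>p q f z. (bcomp k (fst z) f, bcomp n (snd z) f))"
  by (auto simp: cube_def cprod_def yon_def)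

lemma boxk_simps:
  "cells (boxk k n e) p = {z. bmor k p (fst z) \<and> snd z \<in> cells (obox n e) p}"
  "act (boxk k n e) = (\<lambda>p q f z. (bcomp k (fst z) f, bcomp n (snd z) f))"
proof -
  have "act (obox n e) = (\<lambda>p q f g. bcomp n g f)" by (simp add: obox_def)
  then show "cells (boxk k n e) p = {z. bmor k p (fst z) \<and> snd z \<in> cells (obox n e) p}"
    "act (boxk k n e) = (\<lambda>p q f z. (bcomp k (fst z) f, bcomp n (snd z) f))"
    by (auto simp: boxk_def cprod_def yon_def)
qed

lemma expo_simps[simp]:
  "cells (expo A) n = {\<eta>. nat_trans (cube n 1) A \<eta>}"
  "act (expo A) = (\<lambda>n m f \<eta>. (\<lambda>p z. if z \<in> cells (cube m 1) p
                                         then \<eta> p (bcomp n f (fst z), snd z) else undefined))"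
  by (auto simp: expo_def)

lemma terminal_simps[simp]: "cells terminal m = UNIV" "act terminal = (\<lambda>n m f x. x)"
  by (auto simp: terminal_def)

lemma yon_simps[simp]: "cells (yon n) m = {g. bmor n m g}" "act (yon n) = (\<lambda>p q f g. bcomp n g f)"
  by (auto simp: yon_def)

lemma boxk_subset_cube: "z \<in> cells (boxk k n e) p \<Longrightarrow> z \<in> cells (cube k n) p"
  by (auto simp: boxk_simps cube_simps obox_bmor)

lemma cube_act_cell: "z \<in> cells (cube k n) p \<Longrightarrow> bmor p q f \<Longrightarrow> act (cube k n) p q f z \<in> cells (cube k n) q"
  by (auto simp: cube_simps intro: bmor_bcomp)

lemma boxk_act_cell: "z \<in> cells (boxk k n e) p \<Longrightarrow> bmor p q f \<Longrightarrow> act (boxk k n e) p q f z \<in> cells (boxk k n e) q"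
  by (auto simp: boxk_simps intro: bmor_bcomp obox_act)

lemma cubical_act_cell: "cubical X \<Longrightarrow> bmor n m f \<Longrightarrow> x \<in> cells X n \<Longrightarrow> act X n m f x \<in> cells X m"
  by (simp add: cubical_def)

lemma cubical_act_bid: "cubical X \<Longrightarrow> x \<in> cells X n \<Longrightarrow> act X n n (bid n) x = x"
  by (simp add: cubical_def)

lemma cubical_act_bcomp:
  "cubical X \<Longrightarrow> bmor n m f \<Longrightarrow> bmor m p g \<Longrightarrow> x \<in> cells X n \<Longrightarrow>
     act X n p (bcomp n f g) x = act X m p g (act X n m f x)"
  by (simp add: cubical_def)

lemma nat_transI:
  assumes "\<And>m x. x \<in> cells X m \<Longrightarrow> \<eta> m x \<in> cells Y m"
    "\<And>n m f x. bmor n m f \<Longrightarrow> x \<in> cells X n \<Longrightarrow> \<eta> m (act X n m f x) = act Y n m f (\<eta> n x)"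
    "\<And>m x. x \<notin> cells X m \<Longrightarrow> \<eta> m x = undefined"
  shows "nat_trans X Y \<eta>"
  using assms by (simp add: nat_trans_def)

lemma nat_trans_cell: "nat_trans X Y \<eta> \<Longrightarrow> x \<in> cells X m \<Longrightarrow> \<eta> m x \<in> cells Y m"
  by (simp add: nat_trans_def)

lemma nat_trans_act:
  "nat_trans X Y \<eta> \<Longrightarrow> bmor n m f \<Longrightarrow> x \<in> cells X n \<Longrightarrow> \<eta> m (act X n m f x) = act Y n m f (\<eta> n x)"
  by (simp add: nat_trans_def)

lemma nat_trans_undefined: "nat_trans X Y \<eta> \<Longrightarrow> x \<notin> cells X m \<Longrightarrow> \<eta> m x = undefined"
  by (simp add: nat_trans_def)

lemma nrestr_apply: "z \<in> cells S p \<Longrightarrow> nrestr S \<eta> p z = \<eta> p z"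
  by (simp add: nrestr_def)

lemma ncomp_apply: "x \<in> cells X m \<Longrightarrow> ncomp X \<eta> \<theta> m x = \<eta> m (\<theta> m x)"
  by (simp add: ncomp_def)

lemma nat_trans_to_terminal: "nat_trans X terminal (to_terminal X)"
  by (rule nat_transI) (simp_all add: to_terminal_def unit_eq)

lemma expo_act_cell:
  assumes \<gamma>: "\<gamma> \<in> cells (expo A) m" and f: "bmor m m' f"
  shows "act (expo A) m m' f \<gamma> \<in> cells (expo A) m'"
proof -
  have \<gamma>N: "nat_trans (cube m 1) A \<gamma>" using \<gamma> by simp
  define \<gamma>' where "\<gamma>' = act (expo A) m m' f \<gamma>"
  have \<gamma>'_apply: "\<gamma>' p w = \<gamma> p (bcomp m f (fst w), snd w)" if "w \<in> cells (cube m' 1) p" for p w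
    using that by (simp add: \<gamma>'_def)
  have "nat_trans (cube m' 1) A \<gamma>'"
  proof (rule nat_transI)
    fix p w assume "w \<in> cells (cube m' 1) p"
    then show "\<gamma>' p w \<in> cells A p"
      using nat_trans_cell[OF \<gamma>N] bmor_bcomp[OF f] by (simp add: \<gamma>'_apply cube_simps)
  next
    fix p q h w assume h: "bmor p q h" and w: "w \<in> cells (cube m' 1) p"
    then show "\<gamma>' q (act (cube m' 1) p q h w) = act A p q h (\<gamma>' p w)"
      using nat_trans_act[OF \<gamma>N h, of "(bcomp m f (fst w), snd w)"] bmor_bcomp[OF f] cube_act_cell[OF w h]
      by (simp add: \<gamma>'_apply cube_simps bcomp_assoc[OF f])
  qed (simp add: \<gamma>'_def)
  then show ?thesis by (simp add: \<gamma>'_def)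
qed

definition yon_mor :: "nat \<Rightarrow> nat \<Rightarrow> bmap \<Rightarrow> nat \<Rightarrow> bmap \<Rightarrow> bmap" where
  "yon_mor k k' F = (\<lambda>p g. if bmor k' p g then bcomp k F g else undefined)"

lemma nat_trans_yon_mor: "bmor k k' F \<Longrightarrow> nat_trans (yon k') (yon k) (yon_mor k k' F)"
  by (rule nat_transI) (auto simp: yon_mor_def bmor_bcomp bcomp_assoc intro: bmor_bcomp)

lemma ncomp_times1_yon_mor:
  "z \<in> cells X p \<Longrightarrow> bmor k' p (fst z) \<Longrightarrow>
     ncomp X \<eta> (times1 (yon_mor k k' F)) p z = \<eta> p (bcomp k F (fst z), snd z)"
  by (simp add: ncomp_def times1_def yon_mor_def)

lemma ncomp_to_terminal_times1_yon_mor: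
  "bmor k k' F \<Longrightarrow> ncomp (cube k' n) (to_terminal (cube k n)) (times1 (yon_mor k k' F)) = to_terminal (cube k' n)"
  by (auto simp: fun_eq_iff ncomp_def times1_def yon_mor_def to_terminal_def cube_simps bmor_bcomp)

text \<open>The pullback of an m-cell y along the projection I^(m+1) \<times> I^n \<rightarrow> I^m; these are the
  degenerate cubes on which normality of a filler is used.\<close>
definition degen :: "'a cset \<Rightarrow> 'a \<Rightarrow> nat \<Rightarrow> nat \<Rightarrow> nat \<Rightarrow> bmap \<times> bmap \<Rightarrow> 'a" where
  "degen Y y m n = (\<lambda>p z. if z \<in> cells (cube (Suc m) n) p
      then act Y m p (bcomp m (drop_last m) (fst z)) y else undefined)"

lemma nat_trans_degen:
  assumes Y: "cubical Y" and y: "y \<in> cells Y m"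
  shows "nat_trans (cube (Suc m) n) Y (degen Y y m n)"
proof (rule nat_transI)
  fix p z assume "z \<in> cells (cube (Suc m) n) p"
  then show "degen Y y m n p z \<in> cells Y p"
    by (auto simp: degen_def cube_simps intro!: cubical_act_cell[OF Y _ y] bmor_bcomp[OF bmor_drop_last])
next
  fix p q f z assume f: "bmor p q f" and z: "z \<in> cells (cube (Suc m) n) p"
  have D: "bmor m p (bcomp m (drop_last m) (fst z))" using z by (simp add: cube_simps bmor_bcomp[OF bmor_drop_last])
  show "degen Y y m n q (act (cube (Suc m) n) p q f z) = act Y p q f (degen Y y m n p z)"
    using cube_act_cell[OF z f] z cubical_act_bcomp[OF Y D f y]
    by (simp add: degen_def bcomp_assoc cube_simps)
qed (simp add: degen_def)

lemma ncomp_degen_one_times_pi: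
  "ncomp (cube (Suc m) (Suc n)) (degen Y y m n) (one_times_pi n) = degen Y y m (Suc n)"
  by (auto simp: fun_eq_iff degen_def ncomp_def one_times_pi_def cube_simps intro: bmor_bcomp[OF bmor_shift])

lemma ncomp_degen:
  assumes \<eta>: "nat_trans Y Z \<eta>" and y: "y \<in> cells Y m"
  shows "ncomp (cube (Suc m) n) \<eta> (degen Y y m n) = degen Z (\<eta> m y) m n"
proof (intro ext)
  fix p z
  show "ncomp (cube (Suc m) n) \<eta> (degen Y y m n) p z = degen Z (\<eta> m y) m n p z"
  proof (cases "z \<in> cells (cube (Suc m) n) p")
    case True
    then have "bmor m p (bcomp m (drop_last m) (fst z))" by (simp add: cube_simps bmor_bcomp[OF bmor_drop_last])
    then show ?thesis using True by (simp add: ncomp_def degen_def nat_trans_act[OF \<eta> _ y])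
  qed (simp add: ncomp_def degen_def)
qed

lemma degen_last_to_bot:
  "cubical Y \<Longrightarrow> y \<in> cells Y m \<Longrightarrow> degen Y y m 1 m (last_to_bot m, cell1 m (Suc m)) = y"
  by (simp add: degen_def cube_simps bcomp_drop_last_last_to_bot cubical_act_bid)

lemma uniform_kan_fibD:
  assumes "uniform_kan_fib Y X f \<phi>" "kan_square Y X f n e k a b'"
  shows "nat_trans (cube k n) Y (\<phi> n e k a b')" "nrestr (boxk k n e) (\<phi> n e k a b') = b'"
    "ncomp (cube k n) f (\<phi> n e k a b') = a"
  using assms unfolding uniform_kan_fib_def by blast+

lemma uniform_kan_fib_reindex:
  assumes "uniform_kan_fib Y X f \<phi>" "kan_square Y X f n e k a b'" "1 \<le> j" "nat_trans (yon j) (yon k) \<alpha>"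
  shows "ncomp (cube j n) (\<phi> n e k a b') (times1 \<alpha>) =
        \<phi> n e j (ncomp (cube j n) a (times1 \<alpha>)) (ncomp (boxk j n e) b' (times1 \<alpha>))"
  using assms unfolding uniform_kan_fib_def by blast

lemma normal_filler_degen:
  assumes \<phi>: "normal_filler Y X f \<phi>" and Y: "cubical Y" and y: "y \<in> cells Y m"
  shows "\<phi> (Suc n) e (Suc m) (ncomp (cube (Suc m) (Suc n)) f (degen Y y m (Suc n)))
           (nrestr (boxk (Suc m) (Suc n) e) (degen Y y m (Suc n))) = degen Y y m (Suc n)"
proof -
  have "\<phi> (Suc n) e (Suc m)
          (ncomp (cube (Suc m) (Suc n)) f (ncomp (cube (Suc m) (Suc n)) (degen Y y m n) (one_times_pi n)))
          (nrestr (boxk (Suc m) (Suc n) e) (ncomp (cube (Suc m) (Suc n)) (degen Y y m n) (one_times_pi n)))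
        = ncomp (cube (Suc m) (Suc n)) (degen Y y m n) (one_times_pi n)"
    using \<phi> nat_trans_degen[OF Y y, of n] unfolding normal_filler_def Let_def by simp
  then show ?thesis by (simp only: ncomp_degen_one_times_pi)
qed

section \<open>The homotopy in A^I and its lifting problem\<close>

text \<open>For a path \<gamma> : I^m \<times> I \<rightarrow> A, the open box over I^(m+1) \<times> I^2 whose faces are \<gamma> at t = 1 and
  the constant path at \<gamma>(-,0) at t = 0 and at s = 0, where (s,t) are the coordinates of I^2.
  The last coordinate of I^(m+1) is a dummy, needed because fillers only exist for k \<ge> 1.\<close>
definition square_box :: "(nat \<Rightarrow> bmap \<times> bmap \<Rightarrow> 'a) \<Rightarrow> nat \<Rightarrow> nat \<Rightarrow> bmap \<times> bmap \<Rightarrow> 'a" where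
  "square_box \<gamma> m = (\<lambda>p z. if z \<in> cells (boxk (Suc m) 2 True) p
      then \<gamma> p (bcomp m (drop_last m) (fst z), cell1 p (if snd z 2 = Suc p then snd z 1 else 0))
      else undefined)"

text \<open>The transpose I^k \<times> I \<rightarrow> A^I of H : I^k \<times> I^2 \<rightarrow> A, with s as the path coordinate.\<close>
definition curry_square :: "(nat \<Rightarrow> bmap \<times> bmap \<Rightarrow> 'a) \<Rightarrow> nat \<Rightarrow> nat \<Rightarrow> bmap \<times> bmap \<Rightarrow> (nat \<Rightarrow> bmap \<times> bmap \<Rightarrow> 'a)" where
  "curry_square H k = (\<lambda>p z. if z \<in> cells (cube k 1) p then
      (\<lambda>q w. if w \<in> cells (cube p 1) q
        then H q (bcomp k (fst z) (fst w), cell2 q (snd w 1) (fst w (snd z 1))) else undefined)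
      else undefined)"

definition lift_box :: "(nat \<Rightarrow> 'a \<Rightarrow> 'b) \<Rightarrow> (nat \<Rightarrow> bmap \<times> bmap \<Rightarrow> 'a) \<Rightarrow> nat \<Rightarrow> nat \<Rightarrow> bmap \<times> bmap \<Rightarrow> 'b" where
  "lift_box b \<gamma> m = (\<lambda>p z. if z \<in> cells (boxk (Suc m) 1 True) p
      then b p (\<gamma> p (bcomp m (drop_last m) (fst z), cell1 p 0)) else undefined)"

lemma nat_trans_square_box:
  assumes \<gamma>: "nat_trans (cube m 1) A \<gamma>"
  shows "nat_trans (boxk (Suc m) 2 True) A (square_box \<gamma> m)"
proof (rule nat_transI)
  fix p z assume z: "z \<in> cells (boxk (Suc m) 2 True) p"
  then have h: "bmor 2 p (snd z)" by (auto simp: boxk_simps intro: obox_bmor)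
  have g: "bmor (Suc m) p (fst z)" using z by (simp add: boxk_simps)
  have v: "(if snd z 2 = Suc p then snd z 1 else 0) \<le> Suc p" using bmor_coord_le(1)[OF h] by simp
  have "(bcomp m (drop_last m) (fst z), cell1 p (if snd z 2 = Suc p then snd z 1 else 0)) \<in> cells (cube m 1) p"
    using bmor_cell1[OF v] bmor_bcomp[OF bmor_drop_last g] by (simp add: cube_simps)
  then show "square_box \<gamma> m p z \<in> cells A p" using z nat_trans_cell[OF \<gamma>] by (simp add: square_box_def)
next
  fix p q f z assume f: "bmor p q f" and z: "z \<in> cells (boxk (Suc m) 2 True) p"
  have h: "bmor 2 p (snd z)" using z by (auto simp: boxk_simps intro: obox_bmor)
  have g: "bmor (Suc m) p (fst z)" using z by (simp add: boxk_simps)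
  define v where "v = (if snd z 2 = Suc p then snd z 1 else 0)"
  have v: "v \<le> Suc p" using h by (auto simp: v_def intro: bmor_coord_le)
  have fv: "f v = (if bcomp 2 (snd z) f 2 = Suc q then bcomp 2 (snd z) f 1 else 0)"
    using obox_2_True_cases[of "snd z" p] z f h bmorD[OF f] bmorD[OF h]
    by (auto simp: v_def bcomp_apply boxk_simps)
  have "act A p q f (\<gamma> p (bcomp m (drop_last m) (fst z), cell1 p v))
      = \<gamma> q (bcomp m (bcomp m (drop_last m) (fst z)) f, bcomp 1 (cell1 p v) f)"
    using nat_trans_act[OF \<gamma> f, of "(bcomp m (drop_last m) (fst z), cell1 p v)"] g v
    by (simp add: cube_simps bmor_bcomp[OF bmor_drop_last])
  then show "square_box \<gamma> m q (act (boxk (Suc m) 2 True) p q f z) = act A p q f (square_box \<gamma> m p z)"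
    using boxk_act_cell[OF z f] z f v fv
    by (simp add: square_box_def bcomp_cell1 bcomp_assoc[OF bmor_drop_last] v_def[symmetric])
      (simp add: boxk_simps bcomp_assoc[OF bmor_drop_last])
qed (simp add: square_box_def)

lemma curry_square_cell:
  assumes H: "nat_trans (cube k 2) A H" and z: "z \<in> cells (cube k 1) p"
  shows "curry_square H k p z \<in> cells (expo A) p"
proof -
  have g: "bmor k p (fst z)" and h: "bmor 1 p (snd z)" using z by (auto simp: cube_simps)
  have h1: "snd z 1 \<le> Suc p" using h by (rule bmor_coord_le)
  have cell: "(bcomp k (fst z) (fst w), cell2 q (snd w 1) (fst w (snd z 1))) \<in> cells (cube k 2) q"
    if w: "w \<in> cells (cube p 1) q" for q w
  proof -
    have w1: "bmor p q (fst w)" and w2: "bmor 1 q (snd w)" using w by (auto simp: cube_simps)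
    show ?thesis using bmor_bcomp[OF g w1] bmor_coord_le(3)[OF w2] bmorD(3)[OF w1 h1]
      by (simp add: cube_simps)
  qed
  show ?thesis
  proof (simp add: curry_square_def z, rule nat_transI)
    fix q w assume "w \<in> cells (cube p 1) q"
    then show "(if w \<in> cells (cube p 1) q
        then H q (bcomp k (fst z) (fst w), cell2 q (snd w 1) (fst w (snd z 1))) else undefined) \<in> cells A q"
      using nat_trans_cell[OF H cell] by simp
  next
    fix q q' f w assume f: "bmor q q' f" and w: "w \<in> cells (cube p 1) q"
    have w1: "bmor p q (fst w)" and w2: "bmor 1 q (snd w)" using w by (auto simp: cube_simps)
    have "H q' (act (cube k 2) q q' f (bcomp k (fst z) (fst w), cell2 q (snd w 1) (fst w (snd z 1))))
        = act A q q' f (H q (bcomp k (fst z) (fst w), cell2 q (snd w 1) (fst w (snd z 1))))"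
      by (rule nat_trans_act[OF H f cell[OF w]])
    then show "(if act (cube p 1) q q' f w \<in> cells (cube p 1) q'
        then H q' (bcomp k (fst z) (fst (act (cube p 1) q q' f w)),
                   cell2 q' (snd (act (cube p 1) q q' f w) 1) (fst (act (cube p 1) q q' f w) (snd z 1)))
        else undefined)
      = act A q q' f (if w \<in> cells (cube p 1) q
          then H q (bcomp k (fst z) (fst w), cell2 q (snd w 1) (fst w (snd z 1))) else undefined)"
      using w f g h1 cube_act_cell[OF w f] bmor_coord_le(3)[OF w2] bmorD(3)[OF w1 h1]
      by (simp add: bcomp_cell2 bcomp_assoc bcomp_apply cube_simps)
  qed simp
qed

lemma nat_trans_curry_square:
  assumes H: "nat_trans (cube k 2) A H"
  shows "nat_trans (cube k 1) (expo A) (curry_square H k)"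
proof (rule nat_transI)
  fix p z assume "z \<in> cells (cube k 1) p"
  then show "curry_square H k p z \<in> cells (expo A) p" by (rule curry_square_cell[OF H])
next
  fix p p' f z assume f: "bmor p p' f" and z: "z \<in> cells (cube k 1) p"
  have g: "bmor k p (fst z)" and h1: "snd z 1 \<le> Suc p" using z by (auto simp: cube_simps intro: bmor_coord_le)
  have z': "act (cube k 1) p p' f z \<in> cells (cube k 1) p'" using cube_act_cell[OF z f] .
  show "curry_square H k p' (act (cube k 1) p p' f z) = act (expo A) p p' f (curry_square H k p z)"
  proof (intro ext)
    fix q w show "curry_square H k p' (act (cube k 1) p p' f z) q w = act (expo A) p p' f (curry_square H k p z) q w"
      using z z' f g h1
      by (cases "w \<in> cells (cube p' 1) q") (auto simp: curry_square_def cube_simps bcomp_assoc bcomp_apply bmor_bcomp)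
  qed
qed (simp add: curry_square_def)

lemma nat_trans_lift_box:
  assumes \<gamma>: "nat_trans (cube m 1) A \<gamma>" and b: "nat_trans A B b"
  shows "nat_trans (boxk (Suc m) 1 True) B (lift_box b \<gamma> m)"
proof (rule nat_transI)
  fix p z assume z: "z \<in> cells (boxk (Suc m) 1 True) p"
  then show "lift_box b \<gamma> m p z \<in> cells B p"
    by (auto simp: lift_box_def boxk_simps cube_simps
        intro!: nat_trans_cell[OF b] nat_trans_cell[OF \<gamma>] bmor_bcomp[OF bmor_drop_last])
next
  fix p q f z assume f: "bmor p q f" and z: "z \<in> cells (boxk (Suc m) 1 True) p"
  have g: "bmor (Suc m) p (fst z)" using z by (simp add: boxk_simps)
  have c: "(bcomp m (drop_last m) (fst z), cell1 p 0) \<in> cells (cube m 1) p"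
    using g by (simp add: cube_simps bmor_bcomp[OF bmor_drop_last])
  have "act B p q f (b p (\<gamma> p (bcomp m (drop_last m) (fst z), cell1 p 0)))
      = b q (act A p q f (\<gamma> p (bcomp m (drop_last m) (fst z), cell1 p 0)))"
    using nat_trans_act[OF b f nat_trans_cell[OF \<gamma> c]] by simp
  also have "\<dots> = b q (\<gamma> q (bcomp m (bcomp m (drop_last m) (fst z)) f, bcomp 1 (cell1 p 0) f))"
    using nat_trans_act[OF \<gamma> f c] by (simp add: cube_simps)
  finally show "lift_box b \<gamma> m q (act (boxk (Suc m) 1 True) p q f z) = act B p q f (lift_box b \<gamma> m p z)"
    using boxk_act_cell[OF z f] z f
    by (simp add: lift_box_def bcomp_cell1 bcomp_assoc[OF bmor_drop_last] bmorD(1)[OF f])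
      (simp add: boxk_simps bcomp_assoc[OF bmor_drop_last])
qed (simp add: lift_box_def)

lemma curry_square_on_obox:
  assumes \<gamma>: "nat_trans (cube m 1) A \<gamma>" and H_box: "nrestr (boxk (Suc m) 2 True) H = square_box \<gamma> m"
    and z: "z \<in> cells (boxk (Suc m) 1 True) p"
  shows "curry_square H (Suc m) p z = rmap A p (\<gamma> p (bcomp m (drop_last m) (fst z), cell1 p 0))"
proof -
  have g: "bmor (Suc m) p (fst z)" using z by (simp add: boxk_simps)
  have z1: "snd z 1 = 0" using z by (intro obox_1_True_cell[of _ p]) (simp add: boxk_simps)
  define D where "D = bcomp m (drop_last m) (fst z)"
  have c: "(D, cell1 p 0) \<in> cells (cube m 1) p" using g by (simp add: D_def cube_simps bmor_bcomp[OF bmor_drop_last])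
  have y: "\<gamma> p (D, cell1 p 0) \<in> cells A p" by (rule nat_trans_cell[OF \<gamma> c])
  show ?thesis unfolding D_def[symmetric]
  proof (rule ext, rule ext)
    fix q w
    show "curry_square H (Suc m) p z q w = rmap A p (\<gamma> p (D, cell1 p 0)) q w"
    proof (cases "w \<in> cells (cube p 1) q")
      case False then show ?thesis using y boxk_subset_cube[OF z] by (simp add: rmap_def curry_square_def)
    next
      case w: True
      have w1: "bmor p q (fst w)" and w2: "bmor 1 q (snd w)" using w by (auto simp: cube_simps)
      have bx: "(bcomp (Suc m) (fst z) (fst w), cell2 q (snd w 1) 0) \<in> cells (boxk (Suc m) 2 True) q"
        using g w1 bmor_coord_le(3)[OF w2] by (simp add: boxk_simps cell2_bot_in_obox bmor_bcomp)
      have "act A p q (fst w) (\<gamma> p (D, cell1 p 0)) = \<gamma> q (bcomp m D (fst w), bcomp 1 (cell1 p 0) (fst w))"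
        using nat_trans_act[OF \<gamma> w1 c] by (simp add: cube_simps)
      moreover have "H q (bcomp (Suc m) (fst z) (fst w), cell2 q (snd w 1) 0)
          = square_box \<gamma> m q (bcomp (Suc m) (fst z) (fst w), cell2 q (snd w 1) 0)"
        using nrestr_apply[OF bx, of H] unfolding H_box by simp
      ultimately show ?thesis using y boxk_subset_cube[OF z] w z1 bmorD(1)[OF w1] w1 bx
        by (simp add: rmap_def curry_square_def square_box_def bcomp_cell1 D_def bcomp_assoc[OF bmor_drop_last])
    qed
  qed
qed

lemma curry_square_last_to_bot:
  assumes \<gamma>: "nat_trans (cube m 1) A \<gamma>" and H_box: "nrestr (boxk (Suc m) 2 True) H = square_box \<gamma> m"
  shows "curry_square H (Suc m) m (last_to_bot m, cell1 m (Suc m)) = \<gamma>"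
proof (rule ext, rule ext)
  fix q w
  have c: "(last_to_bot m, cell1 m (Suc m)) \<in> cells (cube (Suc m) 1) m" by (simp add: cube_simps)
  show "curry_square H (Suc m) m (last_to_bot m, cell1 m (Suc m)) q w = \<gamma> q w"
  proof (cases "w \<in> cells (cube m 1) q")
    case False then show ?thesis using c nat_trans_undefined[OF \<gamma> False] by (simp add: curry_square_def)
  next
    case w: True
    have w1: "bmor m q (fst w)" and w2: "bmor 1 q (snd w)" using w by (auto simp: cube_simps)
    have bx: "(bcomp (Suc m) (last_to_bot m) (fst w), cell2 q (snd w 1) (Suc q)) \<in> cells (boxk (Suc m) 2 True) q"
      using bmor_bcomp[OF bmor_last_to_bot w1] cell2_top_in_obox[OF bmor_coord_le(3)[OF w2]]
      by (simp add: boxk_simps)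
    have "bcomp m (drop_last m) (bcomp (Suc m) (last_to_bot m) (fst w)) = fst w"
      by (simp add: bcomp_assoc[OF bmor_drop_last] bcomp_drop_last_last_to_bot bcomp_bid_left[OF w1])
    then have "square_box \<gamma> m q (bcomp (Suc m) (last_to_bot m) (fst w), cell2 q (snd w 1) (Suc q)) = \<gamma> q w"
      using bx cell1_eta[OF w2] by (simp add: square_box_def cell2_def)
    moreover have "H q (bcomp (Suc m) (last_to_bot m) (fst w), cell2 q (snd w 1) (Suc q))
        = square_box \<gamma> m q (bcomp (Suc m) (last_to_bot m) (fst w), cell2 q (snd w 1) (Suc q))"
      using nrestr_apply[OF bx, of H] unfolding H_box by simp
    ultimately show ?thesis using c w bmorD(2)[OF w1] by (simp add: curry_square_def)
  qed
qed

lemma kan_square_square_box: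
  "nat_trans (cube m 1) A \<gamma> \<Longrightarrow>
     kan_square A terminal (to_terminal A) 2 True (Suc m) (to_terminal (cube (Suc m) 2)) (square_box \<gamma> m)"
  by (simp add: kan_square_def nat_trans_to_terminal nat_trans_square_box fun_eq_iff unit_eq)

lemma kan_square_curry_square:
  assumes \<gamma>: "nat_trans (cube m 1) A \<gamma>" and H: "nat_trans (cube (Suc m) 2) A H"
    and H_box: "nrestr (boxk (Suc m) 2 True) H = square_box \<gamma> m"
    and \<pi>: "nat_trans B (expo A) \<pi>" and b: "nat_trans A B b" and \<pi>b: "ncomp A \<pi> b = rmap A"
  shows "kan_square B (expo A) \<pi> 1 True (Suc m) (curry_square H (Suc m)) (lift_box b \<gamma> m)"
  unfolding kan_square_def
proof (intro conjI)
  show "ncomp (boxk (Suc m) 1 True) \<pi> (lift_box b \<gamma> m) = nrestr (boxk (Suc m) 1 True) (curry_square H (Suc m))"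
  proof (rule ext, rule ext)
    fix p z
    show "ncomp (boxk (Suc m) 1 True) \<pi> (lift_box b \<gamma> m) p z = nrestr (boxk (Suc m) 1 True) (curry_square H (Suc m)) p z"
    proof (cases "z \<in> cells (boxk (Suc m) 1 True) p")
      case False then show ?thesis by (simp add: ncomp_def nrestr_def)
    next
      case z: True
      define y where "y = \<gamma> p (bcomp m (drop_last m) (fst z), cell1 p 0)"
      have "y \<in> cells A p"
        using z nat_trans_cell[OF \<gamma>] by (simp add: y_def boxk_simps cube_simps bmor_bcomp[OF bmor_drop_last])
      then have "\<pi> p (b p y) = rmap A p y" using ncomp_apply[of y A p \<pi> b] \<pi>b by simp
      then show ?thesis
        using z by (simp add: ncomp_apply nrestr_apply lift_box_def curry_square_on_obox[OF \<gamma> H_box z] y_def)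
    qed
  qed
qed (auto simp: nat_trans_curry_square H nat_trans_lift_box[OF \<gamma> b])

lemma square_box_reindex:
  assumes f: "bmor m m' f"
  shows "ncomp (boxk (Suc m') 2 True) (square_box \<gamma> m) (times1 (yon_mor (Suc m) (Suc m') (extend_last m m' f)))
       = square_box (act (expo A) m m' f \<gamma>) m'"
proof (rule ext, rule ext)
  fix p z
  show "ncomp (boxk (Suc m') 2 True) (square_box \<gamma> m) (times1 (yon_mor (Suc m) (Suc m') (extend_last m m' f))) p z
      = square_box (act (expo A) m m' f \<gamma>) m' p z"
  proof (cases "z \<in> cells (boxk (Suc m') 2 True) p")
    case False then show ?thesis by (simp add: ncomp_def square_box_def)
  next
    case z: True
    have g: "bmor (Suc m') p (fst z)" using z by (simp add: boxk_simps)
    have h: "bmor 2 p (snd z)" using z by (auto simp: boxk_simps intro: obox_bmor)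
    define v where "v = (if snd z 2 = Suc p then snd z 1 else 0)"
    have v: "v \<le> Suc p" using bmor_coord_le(1)[OF h] by (simp add: v_def)
    have c: "(bcomp m' (drop_last m') (fst z), cell1 p v) \<in> cells (cube m' 1) p"
      using bmor_cell1[OF v] bmor_bcomp[OF bmor_drop_last g] by (simp add: cube_simps)
    have bx: "(bcomp (Suc m) (extend_last m m' f) (fst z), snd z) \<in> cells (boxk (Suc m) 2 True) p"
      using z bmor_bcomp[OF bmor_extend_last[OF f] g] by (simp add: boxk_simps)
    show ?thesis using z bx c bcomp_drop_last_extend_last_assoc[OF f g]
      by (simp add: ncomp_times1_yon_mor[OF z g] square_box_def v_def)
  qed
qed

lemma lift_box_reindex:
  assumes f: "bmor m m' f"
  shows "ncomp (boxk (Suc m') 1 True) (lift_box b \<gamma> m) (times1 (yon_mor (Suc m) (Suc m') (extend_last m m' f)))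
       = lift_box b (act (expo A) m m' f \<gamma>) m'"
proof (rule ext, rule ext)
  fix p z
  show "ncomp (boxk (Suc m') 1 True) (lift_box b \<gamma> m) (times1 (yon_mor (Suc m) (Suc m') (extend_last m m' f))) p z
      = lift_box b (act (expo A) m m' f \<gamma>) m' p z"
  proof (cases "z \<in> cells (boxk (Suc m') 1 True) p")
    case False then show ?thesis by (simp add: ncomp_def lift_box_def)
  next
    case z: True
    have g: "bmor (Suc m') p (fst z)" using z by (simp add: boxk_simps)
    have c: "(bcomp m' (drop_last m') (fst z), cell1 p 0) \<in> cells (cube m' 1) p"
      using bmor_bcomp[OF bmor_drop_last g] by (simp add: cube_simps)
    have bx: "(bcomp (Suc m) (extend_last m m' f) (fst z), snd z) \<in> cells (boxk (Suc m) 1 True) p"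
      using z bmor_bcomp[OF bmor_extend_last[OF f] g] by (simp add: boxk_simps)
    show ?thesis using z bx c bcomp_drop_last_extend_last_assoc[OF f g]
      by (simp add: ncomp_times1_yon_mor[OF z g] lift_box_def)
  qed
qed

lemma curry_square_reindex:
  assumes F: "bmor k k' F"
  shows "ncomp (cube k' 1) (curry_square H k) (times1 (yon_mor k k' F))
       = curry_square (ncomp (cube k' 2) H (times1 (yon_mor k k' F))) k'"
proof (rule ext, rule ext)
  fix p z
  show "ncomp (cube k' 1) (curry_square H k) (times1 (yon_mor k k' F)) p z
      = curry_square (ncomp (cube k' 2) H (times1 (yon_mor k k' F))) k' p z"
  proof (cases "z \<in> cells (cube k' 1) p")
    case False then show ?thesis by (simp add: ncomp_def curry_square_def)
  next
    case z: True
    have g: "bmor k' p (fst z)" and h1: "snd z 1 \<le> Suc p"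
      using z by (auto simp: cube_simps intro: bmor_coord_le)
    have zc: "(bcomp k F (fst z), snd z) \<in> cells (cube k 1) p" using z bmor_bcomp[OF F g] by (simp add: cube_simps)
    show ?thesis
    proof (rule ext, rule ext)
      fix q w
      show "ncomp (cube k' 1) (curry_square H k) (times1 (yon_mor k k' F)) p z q w
          = curry_square (ncomp (cube k' 2) H (times1 (yon_mor k k' F))) k' p z q w"
      proof (cases "w \<in> cells (cube p 1) q")
        case False then show ?thesis using z zc by (simp add: ncomp_times1_yon_mor[OF z g] curry_square_def)
      next
        case w: True
        have w1: "bmor p q (fst w)" and w2: "bmor 1 q (snd w)" using w by (auto simp: cube_simps)
        have cc: "(bcomp k' (fst z) (fst w), cell2 q (snd w 1) (fst w (snd z 1))) \<in> cells (cube k' 2) q"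
          using bmor_bcomp[OF g w1] bmor_cell2[OF bmor_coord_le(3)[OF w2] bmorD(3)[OF w1 h1]]
          by (simp add: cube_simps)
        have "ncomp (cube k' 2) H (times1 (yon_mor k k' F)) q (bcomp k' (fst z) (fst w), cell2 q (snd w 1) (fst w (snd z 1)))
            = H q (bcomp k F (bcomp k' (fst z) (fst w)), cell2 q (snd w 1) (fst w (snd z 1)))"
          using cc bmor_bcomp[OF g w1] by (simp add: ncomp_times1_yon_mor)
        then show ?thesis using z zc w
          by (simp add: ncomp_times1_yon_mor[OF z g] curry_square_def bcomp_assoc[OF F])
      qed
    qed
  qed
qed

lemma square_box_rmap:
  assumes x: "x \<in> cells A m"
  shows "square_box (rmap A m x) m = nrestr (boxk (Suc m) 2 True) (degen A x m 2)"
proof (rule ext, rule ext)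
  fix p z
  show "square_box (rmap A m x) m p z = nrestr (boxk (Suc m) 2 True) (degen A x m 2) p z"
  proof (cases "z \<in> cells (boxk (Suc m) 2 True) p")
    case z: True
    have h: "bmor 2 p (snd z)" using z by (auto simp: boxk_simps intro: obox_bmor)
    have g: "bmor (Suc m) p (fst z)" using z by (simp add: boxk_simps)
    have v: "(if snd z 2 = Suc p then snd z 1 else 0) \<le> Suc p" using bmor_coord_le(1)[OF h] by simp
    have "(bcomp m (drop_last m) (fst z), cell1 p (if snd z 2 = Suc p then snd z 1 else 0)) \<in> cells (cube m 1) p"
      using bmor_cell1[OF v] bmor_bcomp[OF bmor_drop_last g] by (simp add: cube_simps)
    then show ?thesis using z boxk_subset_cube[OF z] x
      by (simp add: nrestr_def square_box_def rmap_def degen_def)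
  qed (simp add: nrestr_def square_box_def)
qed

lemma lift_box_rmap:
  assumes b: "nat_trans A B b" and x: "x \<in> cells A m"
  shows "lift_box b (rmap A m x) m = nrestr (boxk (Suc m) 1 True) (degen B (b m x) m 1)"
proof (rule ext, rule ext)
  fix p z
  show "lift_box b (rmap A m x) m p z = nrestr (boxk (Suc m) 1 True) (degen B (b m x) m 1) p z"
  proof (cases "z \<in> cells (boxk (Suc m) 1 True) p")
    case z: True
    have D: "bmor m p (bcomp m (drop_last m) (fst z))"
      using z by (simp add: boxk_simps bmor_bcomp[OF bmor_drop_last])
    then show ?thesis using z boxk_subset_cube[OF z] x nat_trans_act[OF b D x]
      by (simp add: nrestr_def lift_box_def rmap_def degen_def cube_simps)
  qed (simp add: nrestr_def lift_box_def)
qed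

lemma curry_square_degen_apply:
  assumes A: "cubical A" and x: "x \<in> cells A m" and z: "z \<in> cells (cube (Suc m) 1) p"
  shows "curry_square (degen A x m 2) (Suc m) p z = rmap A p (act A m p (bcomp m (drop_last m) (fst z)) x)"
proof (rule ext, rule ext)
  fix q w
  define D where "D = bcomp m (drop_last m) (fst z)"
  have D: "bmor m p D" using z by (simp add: D_def cube_simps bmor_bcomp[OF bmor_drop_last])
  have y: "act A m p D x \<in> cells A p" by (rule cubical_act_cell[OF A D x])
  show "curry_square (degen A x m 2) (Suc m) p z q w = rmap A p (act A m p D x) q w"
  proof (cases "w \<in> cells (cube p 1) q")
    case False then show ?thesis using z y by (simp add: curry_square_def rmap_def)
  next
    case w: True
    have g: "bmor (Suc m) p (fst z)" and h1: "snd z 1 \<le> Suc p"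
      using z by (auto simp: cube_simps intro: bmor_coord_le)
    have w1: "bmor p q (fst w)" and w2: "bmor 1 q (snd w)" using w by (auto simp: cube_simps)
    have "(bcomp (Suc m) (fst z) (fst w), cell2 q (snd w 1) (fst w (snd z 1))) \<in> cells (cube (Suc m) 2) q"
      using bmor_bcomp[OF g w1] bmor_cell2[OF bmor_coord_le(3)[OF w2] bmorD(3)[OF w1 h1]]
      by (simp add: cube_simps)
    then show ?thesis using z w y cubical_act_bcomp[OF A D w1 x]
      by (simp add: curry_square_def rmap_def degen_def D_def bcomp_assoc[OF bmor_drop_last])
  qed
qed

lemma curry_square_degen:
  assumes A: "cubical A" and b: "nat_trans A B b" and \<pi>b: "ncomp A \<pi> b = rmap A" and x: "x \<in> cells A m"
  shows "curry_square (degen A x m 2) (Suc m) = ncomp (cube (Suc m) 1) \<pi> (degen B (b m x) m 1)"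
proof (rule ext, rule ext)
  fix p z
  show "curry_square (degen A x m 2) (Suc m) p z = ncomp (cube (Suc m) 1) \<pi> (degen B (b m x) m 1) p z"
  proof (cases "z \<in> cells (cube (Suc m) 1) p")
    case False then show ?thesis by (simp add: ncomp_def curry_square_def)
  next
    case z: True
    define D where "D = bcomp m (drop_last m) (fst z)"
    have D: "bmor m p D" using z by (simp add: D_def cube_simps bmor_bcomp[OF bmor_drop_last])
    have y: "act A m p D x \<in> cells A p" by (rule cubical_act_cell[OF A D x])
    have "ncomp (cube (Suc m) 1) \<pi> (degen B (b m x) m 1) p z = \<pi> p (b p (act A m p D x))"
      using z nat_trans_act[OF b D x] by (simp add: ncomp_apply degen_def D_def)
    also have "\<dots> = rmap A p (act A m p D x)" using ncomp_apply[OF y, of \<pi> b] \<pi>b by simp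
    finally show ?thesis by (simp add: curry_square_degen_apply[OF A x z] D_def)
  qed
qed

section \<open>The section j\<close>

locale path_lifting =
  fixes A :: "'a cset" and B :: "'b cset" and \<pi> :: "nat \<Rightarrow> 'b \<Rightarrow> (nat \<Rightarrow> bmap \<times> bmap \<Rightarrow> 'a)"
    and b :: "nat \<Rightarrow> 'a \<Rightarrow> 'b"
    and \<phi>A :: "(unit, 'a) filler_op" and \<phi>B :: "(nat \<Rightarrow> bmap \<times> bmap \<Rightarrow> 'a, 'b) filler_op"
  assumes cubical_A: "cubical A" and cubical_B: "cubical B"
    and \<pi>: "nat_trans B (expo A) \<pi>" and b: "nat_trans A B b" and \<pi>_b: "ncomp A \<pi> b = rmap A"
    and uniform_A: "uniform_kan_fib A terminal (to_terminal A) \<phi>A"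
    and normal_A: "normal_filler A terminal (to_terminal A) \<phi>A"
    and uniform_B: "uniform_kan_fib B (expo A) \<pi> \<phi>B"
    and normal_B: "normal_filler B (expo A) \<pi> \<phi>B"
begin

definition square_fill :: "(nat \<Rightarrow> bmap \<times> bmap \<Rightarrow> 'a) \<Rightarrow> nat \<Rightarrow> nat \<Rightarrow> bmap \<times> bmap \<Rightarrow> 'a" where
  "square_fill \<gamma> m = \<phi>A 2 True (Suc m) (to_terminal (cube (Suc m) 2)) (square_box \<gamma> m)"

definition lift_fill :: "(nat \<Rightarrow> bmap \<times> bmap \<Rightarrow> 'a) \<Rightarrow> nat \<Rightarrow> nat \<Rightarrow> bmap \<times> bmap \<Rightarrow> 'b" where
  "lift_fill \<gamma> m = \<phi>B 1 True (Suc m) (curry_square (square_fill \<gamma> m) (Suc m)) (lift_box b \<gamma> m)"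

definition jmap :: "nat \<Rightarrow> (nat \<Rightarrow> bmap \<times> bmap \<Rightarrow> 'a) \<Rightarrow> 'b" where
  "jmap m \<gamma> = (if \<gamma> \<in> cells (expo A) m then lift_fill \<gamma> m m (last_to_bot m, cell1 m (Suc m)) else undefined)"

lemma nat_trans_square_fill: "nat_trans (cube m 1) A \<gamma> \<Longrightarrow> nat_trans (cube (Suc m) 2) A (square_fill \<gamma> m)"
  unfolding square_fill_def by (rule uniform_kan_fibD(1)[OF uniform_A kan_square_square_box])

lemma square_fill_box:
  "nat_trans (cube m 1) A \<gamma> \<Longrightarrow> nrestr (boxk (Suc m) 2 True) (square_fill \<gamma> m) = square_box \<gamma> m"
  unfolding square_fill_def by (rule uniform_kan_fibD(2)[OF uniform_A kan_square_square_box])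

lemma kan_square_lift:
  "nat_trans (cube m 1) A \<gamma> \<Longrightarrow>
     kan_square B (expo A) \<pi> 1 True (Suc m) (curry_square (square_fill \<gamma> m) (Suc m)) (lift_box b \<gamma> m)"
  by (rule kan_square_curry_square[OF _ nat_trans_square_fill square_fill_box \<pi> b \<pi>_b])

lemma nat_trans_lift_fill: "nat_trans (cube m 1) A \<gamma> \<Longrightarrow> nat_trans (cube (Suc m) 1) B (lift_fill \<gamma> m)"
  unfolding lift_fill_def by (rule uniform_kan_fibD(1)[OF uniform_B kan_square_lift])

lemma \<pi>_lift_fill:
  "nat_trans (cube m 1) A \<gamma> \<Longrightarrow> ncomp (cube (Suc m) 1) \<pi> (lift_fill \<gamma> m) = curry_square (square_fill \<gamma> m) (Suc m)"
  unfolding lift_fill_def by (rule uniform_kan_fibD(3)[OF uniform_B kan_square_lift])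

lemma square_fill_rmap:
  assumes x: "x \<in> cells A m"
  shows "square_fill (rmap A m x) m = degen A x m 2"
proof -
  have "to_terminal (cube (Suc m) 2) = ncomp (cube (Suc m) 2) (to_terminal A) (degen A x m 2)"
    by (simp add: fun_eq_iff unit_eq)
  then show ?thesis
    using normal_filler_degen[OF normal_A cubical_A x, of 1 True]
    by (simp add: square_fill_def square_box_rmap[OF x] numeral_2_eq_2)
qed

lemma lift_fill_rmap:
  assumes x: "x \<in> cells A m"
  shows "lift_fill (rmap A m x) m = degen B (b m x) m 1"
  using normal_filler_degen[OF normal_B cubical_B nat_trans_cell[OF b x], of 0 True]
  by (simp add: lift_fill_def square_fill_rmap[OF x] curry_square_degen[OF cubical_A b \<pi>_b x]
      lift_box_rmap[OF b x] One_nat_def)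

lemma square_fill_reindex:
  assumes f: "bmor m m' f" and \<gamma>: "\<gamma> \<in> cells (expo A) m"
  shows "square_fill (act (expo A) m m' f \<gamma>) m'
       = ncomp (cube (Suc m') 2) (square_fill \<gamma> m) (times1 (yon_mor (Suc m) (Suc m') (extend_last m m' f)))"
proof -
  have F: "bmor (Suc m) (Suc m') (extend_last m m' f)" by (rule bmor_extend_last[OF f])
  have "nat_trans (cube m 1) A \<gamma>" using \<gamma> by simp
  from uniform_kan_fib_reindex[OF uniform_A kan_square_square_box[OF this] _ nat_trans_yon_mor[OF F]]
  show ?thesis
    by (simp add: square_fill_def ncomp_to_terminal_times1_yon_mor[OF F] square_box_reindex[OF f, where A = A] del: expo_simps)
qed

lemma lift_fill_reindex:
  assumes f: "bmor m m' f" and \<gamma>: "\<gamma> \<in> cells (expo A) m"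
  shows "lift_fill (act (expo A) m m' f \<gamma>) m'
       = ncomp (cube (Suc m') 1) (lift_fill \<gamma> m) (times1 (yon_mor (Suc m) (Suc m') (extend_last m m' f)))"
proof -
  have F: "bmor (Suc m) (Suc m') (extend_last m m' f)" by (rule bmor_extend_last[OF f])
  have "nat_trans (cube m 1) A \<gamma>" using \<gamma> by simp
  from uniform_kan_fib_reindex[OF uniform_B kan_square_lift[OF this] _ nat_trans_yon_mor[OF F]]
  show ?thesis
    by (simp add: lift_fill_def curry_square_reindex[OF F] square_fill_reindex[OF f \<gamma>, symmetric]
        lift_box_reindex[OF f, where A = A] del: expo_simps)
qed

lemma \<pi>_jmap: "\<gamma> \<in> cells (expo A) m \<Longrightarrow> \<pi> m (jmap m \<gamma>) = \<gamma>"
  using ncomp_apply[of "(last_to_bot m, cell1 m (Suc m))" "cube (Suc m) 1" m \<pi> "lift_fill \<gamma> m"]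
    \<pi>_lift_fill[of m \<gamma>] curry_square_last_to_bot[OF _ square_fill_box]
  by (simp add: jmap_def cube_simps)

lemma jmap_rmap:
  assumes x: "x \<in> cells A m"
  shows "jmap m (rmap A m x) = b m x"
proof -
  have "rmap A m x \<in> cells (expo A) m"
    using nat_trans_cell[OF \<pi> nat_trans_cell[OF b x]] ncomp_apply[OF x, of \<pi> b] \<pi>_b by simp
  then show ?thesis
    by (simp add: jmap_def lift_fill_rmap[OF x] degen_last_to_bot[OF cubical_B nat_trans_cell[OF b x]])
qed

lemma jmap_act:
  assumes f: "bmor m m' f" and \<gamma>: "\<gamma> \<in> cells (expo A) m"
  shows "jmap m' (act (expo A) m m' f \<gamma>) = act B m m' f (jmap m \<gamma>)"
proof -
  have c: "(last_to_bot m, cell1 m (Suc m)) \<in> cells (cube (Suc m) 1) m" by (simp add: cube_simps)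
  have c': "(last_to_bot m', cell1 m' (Suc m')) \<in> cells (cube (Suc m') 1) m'" by (simp add: cube_simps)
  have "jmap m' (act (expo A) m m' f \<gamma>) = lift_fill (act (expo A) m m' f \<gamma>) m' m' (last_to_bot m', cell1 m' (Suc m'))"
    using expo_act_cell[OF \<gamma> f] by (simp add: jmap_def del: expo_simps)
  also have "\<dots> = lift_fill \<gamma> m m' (bcomp (Suc m) (extend_last m m' f) (last_to_bot m'), cell1 m' (Suc m'))"
    using c' by (simp add: lift_fill_reindex[OF f \<gamma>] ncomp_times1_yon_mor del: expo_simps)
  also have "\<dots> = lift_fill \<gamma> m m' (act (cube (Suc m) 1) m m' f (last_to_bot m, cell1 m (Suc m)))"
    using bcomp_cell1[OF f, of "Suc m"] bmorD(2)[OF f]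
    by (simp add: cube_simps bcomp_last_to_bot_extend_last[OF f])
  also have "\<dots> = act B m m' f (jmap m \<gamma>)"
    using nat_trans_act[OF nat_trans_lift_fill f c] \<gamma> by (simp add: jmap_def)
  finally show ?thesis .
qed

lemma nat_trans_jmap: "nat_trans (expo A) B jmap"
proof (rule nat_transI)
  fix m \<gamma> assume "\<gamma> \<in> cells (expo A) m"
  then show "jmap m \<gamma> \<in> cells B m"
    using nat_trans_cell[OF nat_trans_lift_fill, of m \<gamma> "(last_to_bot m, cell1 m (Suc m))" m]
    by (simp add: jmap_def cube_simps)
next
  fix n m f \<gamma> assume "bmor n m f" "\<gamma> \<in> cells (expo A) n"
  then show "jmap m (act (expo A) n m f \<gamma>) = act B n m f (jmap n \<gamma>)" by (rule jmap_act)
qed (simp add: jmap_def)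

end

theorem proposition3p13:
  fixes A :: "'a cset" and B :: "'b cset"
    and \<pi> :: "nat \<Rightarrow> 'b \<Rightarrow> (nat \<Rightarrow> bmap \<times> bmap \<Rightarrow> 'a)" and b :: "nat \<Rightarrow> 'a \<Rightarrow> 'b"
  assumes "cubical A" and "cubical B"
    and "normal_uniform_kan_complex A"
    and "nat_trans B (expo A) \<pi>"
    and "normal_uniform_kan_fib B (expo A) \<pi>"
    and "nat_trans A B b"
    and "ncomp A \<pi> b = rmap A"
  shows "\<exists>j. nat_trans (expo A) B j \<and> ncomp (expo A) \<pi> j = nid (expo A) \<and> ncomp A j (rmap A) = b"
proof -
  obtain \<phi>A where "uniform_kan_fib A terminal (to_terminal A) \<phi>A" "normal_filler A terminal (to_terminal A) \<phi>A"
    using assms(3) unfolding normal_uniform_kan_complex_def normal_uniform_kan_fib_def by blast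
  moreover obtain \<phi>B where "uniform_kan_fib B (expo A) \<pi> \<phi>B" "normal_filler B (expo A) \<pi> \<phi>B"
    using assms(5) unfolding normal_uniform_kan_fib_def by blast
  ultimately interpret path_lifting A B \<pi> b \<phi>A \<phi>B
    using assms by unfold_locales
  have "ncomp (expo A) \<pi> jmap = nid (expo A)"
    by (simp add: fun_eq_iff ncomp_def nid_def \<pi>_jmap del: expo_simps)
  moreover have "ncomp A jmap (rmap A) = b"
    using nat_trans_undefined[OF assms(6)] by (auto simp: fun_eq_iff ncomp_def jmap_rmap)
  ultimately show ?thesis using nat_trans_jmap by blast
qed

end
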